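(* Let $w\ge0$ be integrable on $\mathbb{T}$ and let $I\subset\mathbb{T}$ be an arc with $\int_I\log w\,dm>-\infty$. Let $p>0$ and let $\{f_n\}_{n\ge1}$ be positive functions on $\mathbb{T}$ with $\int_I f_n^p\,w\,dm<C$ for all $n$, for some constant $C>0$. Then the sequence of measures $\{\log^+f_n\,dm\}_{n\ge1}$ is uniformly absolutely continuous on $I$.
   Context: $m$ is normalized arc-length measure on the unit circle $\mathbb{T}$; $\log^+x=\max(0,\log x)$. A sequence of non-negative measures $\{g_n\,dm\}$ is uniformly absolutely continuous on $I$ if for every $\epsilon>0$ there is $\delta>0$, independent of $n$, such that every Borel set $A\subset I$ with $m(A)<\delta$ satisfies $\int_A g_n\,dm<\epsilon$ for all $n$. *)

theory Defs
  imports "HOL-Analysis.Analysis"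
begin

text \<open>Normalized arc-length measure m on the unit circle T = sphere 0 1, realised as
  the push-forward of Lebesgue measure on [0,1) under t \<mapsto> exp(2 pi i t).\<close>
definition circle_measure :: "complex measure" where
  "circle_measure = distr (restrict_space lborel {0..<1}) (restrict_space borel (sphere 0 1))
                          (\<lambda>t. cis (2 * pi * t))"

definition is_arc :: "complex set \<Rightarrow> bool" where
  "is_arc I \<longleftrightarrow> (\<exists>a b. a < b \<and> b \<le> a + 1 \<and> I = (\<lambda>t. cis (2 * pi * t)) ` {a..b})"

definition log_plus :: "real \<Rightarrow> real" where
  "log_plus x = max 0 (ln x)"

end

theory Submission
  imports Defs
begin

text \<open>Applying \<open>ln y \<le> y / t + ln t - 1\<close> to \<open>y = x\<^sup>p w\<close> gives the pointwise bound
  \<open>log\<^sup>+ x \<le> x\<^sup>p w / (p t) + ln t / p + log\<^sup>- w / p\<close> for every \<open>t \<ge> 1\<close>.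
  Integrated over \<open>A \<subseteq> I\<close>, the first term contributes at most \<open>C / (p t)\<close>, which is small
  uniformly in \<open>n\<close> once \<open>t\<close> is large; for this fixed \<open>t\<close> the second contributes
  \<open>m(A) ln t / p\<close>, and the third is small for small \<open>m(A)\<close> by absolute continuity of
  the single integral \<open>\<integral>\<^sub>I log\<^sup>- w dm < \<infinity>\<close>.\<close>

lemma SUP_min_of_nat_ennreal: "(SUP N::nat. min x (of_nat N)) = (x::ennreal)"
  using inf_SUP[of x "\<lambda>N::nat. of_nat N :: ennreal" UNIV]
  by (simp add: inf_min ennreal_SUP_of_nat_eq_top)

lemma nn_integral_truncation_tail:
  fixes g :: "'a \<Rightarrow> ennreal"
  assumes [measurable]: "g \<in> borel_measurable M" and "integral\<^sup>N M g \<noteq> \<infinity>" and "e > 0"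
  shows "\<exists>N::nat. (\<integral>\<^sup>+x. g x - min (g x) (of_nat N) \<partial>M) < ennreal e"
proof -
  define g_trunc where "g_trunc N x = min (g x) (of_nat N)" for N :: nat and x
  have [measurable]: "g_trunc N \<in> borel_measurable M" for N
    unfolding g_trunc_def by measurable
  have "incseq g_trunc"
    by (auto simp: g_trunc_def incseq_def le_fun_def intro: min.coboundedI2)
  then have "integral\<^sup>N M g = (SUP N. integral\<^sup>N M (g_trunc N))"
    using nn_integral_monotone_convergence_SUP[of g_trunc M]
    by (simp add: g_trunc_def SUP_min_of_nat_ennreal)
  then obtain N where N: "integral\<^sup>N M g < integral\<^sup>N M (g_trunc N) + ennreal e"
    using SUP_approx_ennreal[of e UNIV "integral\<^sup>N M g"] assms by auto
  have trunc_le: "g_trunc N x \<le> g x" for x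
    by (simp add: g_trunc_def)
  then have trunc_integral_le: "integral\<^sup>N M (g_trunc N) \<le> integral\<^sup>N M g"
    by (intro nn_integral_mono)
  then have trunc_finite: "integral\<^sup>N M (g_trunc N) \<noteq> \<infinity>"
    using assms(2) by (auto simp: top_unique)
  have "(\<integral>\<^sup>+x. g x - g_trunc N x \<partial>M) = integral\<^sup>N M g - integral\<^sup>N M (g_trunc N)"
    using trunc_finite trunc_le by (intro nn_integral_diff) auto
  also have "\<dots> < ennreal e"
    using N trunc_finite trunc_integral_le by (simp add: minus_less_iff_ennreal add.commute less_top)
  finally show ?thesis
    unfolding g_trunc_def by blast
qed

lemma nn_integral_absolutely_continuous:
  fixes g :: "'a \<Rightarrow> ennreal"
  assumes [measurable]: "g \<in> borel_measurable M" and "integral\<^sup>N M g \<noteq> \<infinity>" and "e > 0"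
  shows "\<exists>d>0. \<forall>A\<in>sets M. emeasure M A < ennreal d \<longrightarrow>
           (\<integral>\<^sup>+x\<in>A. g x \<partial>M) < ennreal e"
proof -
  obtain N :: nat where tail: "(\<integral>\<^sup>+x. g x - min (g x) (of_nat N) \<partial>M) < ennreal (e/2)"
    using nn_integral_truncation_tail[of g M "e/2"] assms by auto
  define d where "d = e / (2 * (real N + 1))"
  have "d > 0" using \<open>e > 0\<close> by (simp add: d_def)
  moreover have "(\<integral>\<^sup>+x\<in>A. g x \<partial>M) < ennreal e"
    if [measurable]: "A \<in> sets M" and A: "emeasure M A < ennreal d" for A
  proof -
    have "g x * indicator A x \<le> of_nat N * indicator A x + (g x - min (g x) (of_nat N))" for x
    proof (cases "x \<in> A")
      case True
      have "g x = min (g x) (of_nat N) + (g x - min (g x) (of_nat N))"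
        by (simp add: add_diff_inverse_ennreal)
      also have "\<dots> \<le> of_nat N + (g x - min (g x) (of_nat N))"
        by (intro add_right_mono) simp
      finally show ?thesis using True by simp
    qed simp
    then have "(\<integral>\<^sup>+x\<in>A. g x \<partial>M) \<le>
        of_nat N * emeasure M A + (\<integral>\<^sup>+x. g x - min (g x) (of_nat N) \<partial>M)"
      by (subst nn_integral_cmult_indicator[symmetric], simp, subst nn_integral_add[symmetric])
        (auto intro!: nn_integral_mono)
    also have "\<dots> < ennreal (e/2 + e/2)"
    proof (rule add_mono_ennreal[OF _ tail])
      have "of_nat N * emeasure M A \<le> ennreal (real N * d)"
        using A \<open>d > 0\<close> by (simp add: ennreal_mult ennreal_of_nat_eq_real_of_nat mult_left_mono)
      also have "\<dots> < ennreal (e/2)"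
        using \<open>e > 0\<close> by (simp add: ennreal_less_iff d_def field_simps)
      finally show "of_nat N * emeasure M A < ennreal (e/2)" .
    qed
    finally show ?thesis by simp
  qed
  ultimately show ?thesis by blast
qed

lemma set_nn_integral_absolutely_continuous:
  fixes g :: "'a \<Rightarrow> ennreal"
  assumes [measurable]: "I \<in> sets M" "g \<in> borel_measurable M"
    and "(\<integral>\<^sup>+x\<in>I. g x \<partial>M) \<noteq> \<infinity>" and "e > 0"
  shows "\<exists>d>0. \<forall>A\<in>sets M. A \<subseteq> I \<longrightarrow> emeasure M A < ennreal d \<longrightarrow>
           (\<integral>\<^sup>+x\<in>A. g x \<partial>M) < ennreal e"
proof -
  have "(\<integral>\<^sup>+x\<in>A. g x \<partial>M) = (\<integral>\<^sup>+x\<in>A. g x * indicator I x \<partial>M)" if "A \<subseteq> I" for A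
    using that by (intro nn_integral_cong) (auto split: split_indicator)
  then show ?thesis
    using nn_integral_absolutely_continuous[of "\<lambda>x. g x * indicator I x" M e] assms by auto
qed

lemma log_plus_le_weighted_powr:
  fixes x w t p :: real
  assumes "x > 0" "w > 0" "t \<ge> 1" "p > 0"
  shows "log_plus x \<le> x powr p * w / (p * t) + ln t / p + max 0 (- ln w) / p"
proof -
  define y where "y = x powr p * w"
  have "y > 0" using assms by (simp add: y_def)
  have "ln (y / t) \<le> y / t - 1"
    using \<open>y > 0\<close> assms by (intro ln_le_minus_one) simp
  then have "p * ln x + ln w - ln t \<le> y / t"
    using \<open>y > 0\<close> assms by (simp add: ln_div ln_mult y_def)
  then have "p * ln x \<le> y / t + ln t + max 0 (- ln w)"
    by linarith
  then have "ln x \<le> y / (p * t) + ln t / p + max 0 (- ln w) / p"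
    using assms by (simp add: field_simps)
  moreover have "0 \<le> y / (p * t) + ln t / p + max 0 (- ln w) / p"
    using \<open>y > 0\<close> assms by simp
  ultimately show ?thesis by (simp add: log_plus_def y_def)
qed

lemma set_nn_integral_log_plus_le:
  fixes f w :: "'a \<Rightarrow> real" and t p :: real
  assumes [measurable]: "A \<in> sets M" "f \<in> borel_measurable M" "w \<in> borel_measurable M"
    and pos: "AE z in M. z \<in> A \<longrightarrow> f z > 0 \<and> w z > 0"
    and "t \<ge> 1" "p > 0"
  shows "(\<integral>\<^sup>+z\<in>A. log_plus (f z) \<partial>M) \<le>
           ennreal (1 / (p * t)) * (\<integral>\<^sup>+z\<in>A. f z powr p * w z \<partial>M)
           + ennreal (ln t / p) * emeasure M A
           + ennreal (1 / p) * (\<integral>\<^sup>+z\<in>A. - ln (w z) \<partial>M)"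
proof -
  have "AE z in M. ennreal (log_plus (f z)) * indicator A z \<le>
          ennreal (1 / (p * t)) * (ennreal (f z powr p * w z) * indicator A z)
          + ennreal (ln t / p) * indicator A z
          + ennreal (1 / p) * (ennreal (- ln (w z)) * indicator A z)"
    using pos
  proof eventually_elim
    case (elim z)
    show ?case
    proof (cases "z \<in> A")
      case True
      with elim have "ennreal (log_plus (f z))
          \<le> ennreal (f z powr p * w z / (p * t) + ln t / p + max 0 (- ln (w z)) / p)"
        using assms by (intro ennreal_leI log_plus_le_weighted_powr) auto
      also have "\<dots> = ennreal (1 / (p * t)) * ennreal (f z powr p * w z) + ennreal (ln t / p)
                      + ennreal (1 / p) * ennreal (- ln (w z))"
        using elim True assms
        by (simp add: divide_nonneg_pos ennreal_mult'[symmetric] ennreal_max_0[of "- ln (w z)", symmetric])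
      finally show ?thesis using True by simp
    qed simp
  qed
  then have "(\<integral>\<^sup>+z\<in>A. log_plus (f z) \<partial>M) \<le>
        (\<integral>\<^sup>+z. ennreal (1 / (p * t)) * (ennreal (f z powr p * w z) * indicator A z)
          + ennreal (ln t / p) * indicator A z
          + ennreal (1 / p) * (ennreal (- ln (w z)) * indicator A z) \<partial>M)"
    by (rule nn_integral_mono_AE)
  also have "\<dots> = ennreal (1 / (p * t)) * (\<integral>\<^sup>+z\<in>A. f z powr p * w z \<partial>M)
           + ennreal (ln t / p) * emeasure M A
           + ennreal (1 / p) * (\<integral>\<^sup>+z\<in>A. - ln (w z) \<partial>M)"
    by (simp add: nn_integral_add nn_integral_cmult nn_integral_cmult_indicator)
  finally show ?thesis .
qed

lemma uniformly_absolutely_continuous_log_plus: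
  fixes f :: "nat \<Rightarrow> 'a \<Rightarrow> real" and w :: "'a \<Rightarrow> real" and p C e :: real
  assumes [measurable]: "I \<in> sets M" "w \<in> borel_measurable M" "\<And>n. f n \<in> borel_measurable M"
    and pos: "\<And>n. AE z in M. z \<in> I \<longrightarrow> f n z > 0 \<and> w z > 0"
    and log_w: "(\<integral>\<^sup>+z\<in>I. - ln (w z) \<partial>M) < \<infinity>"
    and "p > 0"
    and bound: "\<And>n. (\<integral>\<^sup>+z\<in>I. f n z powr p * w z \<partial>M) \<le> ennreal C"
    and "e > 0"
  shows "\<exists>d>0. \<forall>n. \<forall>A\<in>sets M. A \<subseteq> I \<longrightarrow> emeasure M A < ennreal d \<longrightarrow>
           (\<integral>\<^sup>+z\<in>A. log_plus (f n z) \<partial>M) < ennreal e"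
proof -
  define t where "t = max 1 (4 * C / (p * e))"
  have "t \<ge> 1" by (simp add: t_def)
  then have "ln t \<ge> 0" by simp
  obtain d1 where "d1 > 0" and d1: "\<And>A. A \<in> sets M \<Longrightarrow> A \<subseteq> I \<Longrightarrow> emeasure M A < ennreal d1 \<Longrightarrow>
      (\<integral>\<^sup>+z\<in>A. - ln (w z) \<partial>M) < ennreal (p * e / 4)"
    using set_nn_integral_absolutely_continuous[of I M "\<lambda>z. ennreal (- ln (w z))" "p * e / 4"]
      log_w \<open>p > 0\<close> \<open>e > 0\<close> by (auto simp: less_top)
  define d2 where "d2 = p * e / (4 * (ln t + 1))"
  have "d2 > 0"
    using \<open>p > 0\<close> \<open>e > 0\<close> \<open>ln t \<ge> 0\<close> by (simp add: d2_def)
  have weight_term: "ennreal (1 / (p * t)) * (\<integral>\<^sup>+z\<in>A. f n z powr p * w z \<partial>M) \<le> ennreal (e / 4)"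
    if "A \<subseteq> I" for n A
  proof -
    have "(\<integral>\<^sup>+z\<in>A. f n z powr p * w z \<partial>M) \<le> (\<integral>\<^sup>+z\<in>I. f n z powr p * w z \<partial>M)"
      using that by (intro nn_integral_mono) (auto split: split_indicator)
    also note bound[of n]
    finally have "ennreal (1 / (p * t)) * (\<integral>\<^sup>+z\<in>A. f n z powr p * w z \<partial>M)
                    \<le> ennreal (1 / (p * t)) * ennreal C"
      by (rule mult_left_mono) simp
    also have "\<dots> \<le> ennreal (e / 4)"
    proof -
      have "4 * C / (p * e) \<le> t"
        by (simp add: t_def)
      then have "C / (p * t) \<le> e / 4"
        using \<open>p > 0\<close> \<open>e > 0\<close> \<open>t \<ge> 1\<close> by (simp add: field_simps)
      then show ?thesis
        using \<open>p > 0\<close> \<open>t \<ge> 1\<close> by (simp add: ennreal_mult'[symmetric] ennreal_leI)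
    qed
    finally show ?thesis .
  qed
  have measure_term: "ennreal (ln t / p) * emeasure M A \<le> ennreal (e / 4)"
    if "emeasure M A < ennreal d2" for A
  proof -
    have "ennreal (ln t / p) * emeasure M A \<le> ennreal (ln t / p) * ennreal d2"
      using that by (intro mult_left_mono) simp_all
    also have "\<dots> = ennreal (ln t / p * d2)"
      using \<open>ln t \<ge> 0\<close> \<open>p > 0\<close> \<open>d2 > 0\<close> by (subst ennreal_mult) auto
    also have "\<dots> \<le> ennreal (e / 4)"
      using \<open>ln t \<ge> 0\<close> \<open>p > 0\<close> \<open>e > 0\<close> by (intro ennreal_leI) (simp add: d2_def field_simps)
    finally show ?thesis .
  qed
  have log_w_term: "ennreal (1 / p) * (\<integral>\<^sup>+z\<in>A. - ln (w z) \<partial>M) \<le> ennreal (e / 4)"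
    if "A \<in> sets M" "A \<subseteq> I" "emeasure M A < ennreal d1" for A
  proof -
    have "ennreal (1 / p) * (\<integral>\<^sup>+z\<in>A. - ln (w z) \<partial>M) \<le> ennreal (1 / p) * ennreal (p * e / 4)"
      using d1[OF that] by (intro mult_left_mono) simp_all
    also have "\<dots> = ennreal (e / 4)"
      using \<open>p > 0\<close> \<open>e > 0\<close> by (simp add: ennreal_mult[symmetric])
    finally show ?thesis .
  qed
  have "(\<integral>\<^sup>+z\<in>A. log_plus (f n z) \<partial>M) < ennreal e"
    if [measurable]: "A \<in> sets M" and "A \<subseteq> I" and A: "emeasure M A < ennreal (min d1 d2)" for n A
  proof -
    have "emeasure M A < ennreal d1" "emeasure M A < ennreal d2"
      using A by (auto elim!: order.strict_trans2 intro!: ennreal_leI)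
    have "AE z in M. z \<in> A \<longrightarrow> f n z > 0 \<and> w z > 0"
      using pos[of n] by eventually_elim (use \<open>A \<subseteq> I\<close> in auto)
    then have "(\<integral>\<^sup>+z\<in>A. log_plus (f n z) \<partial>M) \<le>
           ennreal (1 / (p * t)) * (\<integral>\<^sup>+z\<in>A. f n z powr p * w z \<partial>M)
           + ennreal (ln t / p) * emeasure M A
           + ennreal (1 / p) * (\<integral>\<^sup>+z\<in>A. - ln (w z) \<partial>M)"
      using \<open>t \<ge> 1\<close> \<open>p > 0\<close> by (intro set_nn_integral_log_plus_le) measurable
    also have "\<dots> \<le> ennreal (e / 4) + ennreal (e / 4) + ennreal (e / 4)"
      using weight_term measure_term log_w_term that \<open>emeasure M A < ennreal d1\<close> \<open>emeasure M A < ennreal d2\<close>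
      by (intro add_mono)
    also have "\<dots> < ennreal e"
      using \<open>e > 0\<close> by (simp flip: ennreal_plus add: ennreal_less_iff)
    finally show ?thesis .
  qed
  then show ?thesis
    using \<open>d1 > 0\<close> \<open>d2 > 0\<close> by (intro exI[of _ "min d1 d2"]) auto
qed

lemma measurable_cis_circle:
  "(\<lambda>t. cis (2 * pi * t)) \<in> restrict_space lborel {0..<1} \<rightarrow>\<^sub>M restrict_space borel (sphere 0 1)"
proof (rule measurable_restrict_space3)
  show "(\<lambda>t. cis (2 * pi * t)) \<in> borel_measurable lborel"
    unfolding measurable_lborel2 by (intro borel_measurable_continuous_onI continuous_intros)
qed auto

lemma emeasure_space_circle_measure: "emeasure circle_measure (space circle_measure) = 1"
proof -
  have "cis (2 * pi * t) \<in> sphere 0 1" for t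
    by simp
  then have "emeasure circle_measure (space circle_measure) = emeasure (restrict_space lborel {0..<1::real}) {0..<1}"
    unfolding circle_measure_def
    by (subst emeasure_distr[OF measurable_cis_circle])
      (auto simp: sets_restrict_space_iff intro!: arg_cong2[where f=emeasure])
  also have "\<dots> = 1"
    by (subst emeasure_restrict_space) auto
  finally show ?thesis .
qed

lemma is_arc_sets_circle_measure:
  assumes "is_arc I"
  shows "I \<in> sets circle_measure"
proof -
  obtain a b where I: "I = (\<lambda>t. cis (2 * pi * t)) ` {a..b}"
    using assms unfolding is_arc_def by blast
  have "compact I"
    unfolding I by (intro compact_continuous_image continuous_intros compact_Icc)
  moreover have "I \<subseteq> sphere 0 1"
    unfolding I by auto
  ultimately show ?thesis
    by (auto simp: circle_measure_def sets_restrict_space_iff compact_imp_closed)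
qed

theorem mainTheorem10:
  fixes w :: "complex \<Rightarrow> real" and I :: "complex set" and p C :: real
    and f :: "nat \<Rightarrow> complex \<Rightarrow> real"
  assumes w_int: "integrable circle_measure w"
    and w_nonneg: "\<forall>z\<in>space circle_measure. w z \<ge> 0"
    and arc: "is_arc I"
    and logw_pos: "AE z in circle_measure. z \<in> I \<longrightarrow> w z > 0"
    and logw_int: "(\<integral>\<^sup>+ z\<in>I. ennreal (- ln (w z)) \<partial>circle_measure) < \<infinity>"
    and p_pos: "p > 0"
    and C_pos: "C > 0"
    and f_meas: "\<And>n. f n \<in> borel_measurable circle_measure"
    and f_pos: "\<And>n. \<forall>z\<in>space circle_measure. f n z > 0"
    and f_bound: "\<And>n. (\<integral>\<^sup>+ z\<in>I. ennreal (f n z powr p * w z) \<partial>circle_measure) < ennreal C"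
  shows "\<forall>\<epsilon>>0. \<exists>\<delta>>0. \<forall>n. \<forall>A\<in>sets circle_measure. A \<subseteq> I \<longrightarrow>
           measure circle_measure A < \<delta> \<longrightarrow>
           (\<integral>\<^sup>+ z\<in>A. ennreal (log_plus (f n z)) \<partial>circle_measure) < ennreal \<epsilon>"
proof (intro allI impI)
  fix \<epsilon> :: real
  assume "\<epsilon> > 0"
  interpret finite_measure circle_measure
    by (rule finite_measureI) (simp add: emeasure_space_circle_measure)
  have pos: "AE z in circle_measure. z \<in> I \<longrightarrow> f n z > 0 \<and> w z > 0" for n
    using logw_pos AE_space by eventually_elim (use f_pos in auto)
  have bound: "(\<integral>\<^sup>+z\<in>I. f n z powr p * w z \<partial>circle_measure) \<le> ennreal C" for n
    using f_bound[of n] by (rule less_imp_le)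
  obtain \<delta> where "\<delta> > 0" and \<delta>: "\<forall>n. \<forall>A\<in>sets circle_measure. A \<subseteq> I \<longrightarrow>
      emeasure circle_measure A < ennreal \<delta> \<longrightarrow>
      (\<integral>\<^sup>+z\<in>A. log_plus (f n z) \<partial>circle_measure) < ennreal \<epsilon>"
    using uniformly_absolutely_continuous_log_plus[where f = f, OF is_arc_sets_circle_measure[OF arc]
        borel_measurable_integrable[OF w_int] f_meas pos logw_int p_pos bound \<open>\<epsilon> > 0\<close>]
    by blast
  have "emeasure circle_measure A < ennreal \<delta>" if "measure circle_measure A < \<delta>" for A
    using that \<open>\<delta> > 0\<close> by (simp add: emeasure_eq_measure ennreal_lessI)
  with \<open>\<delta> > 0\<close> \<delta> show "\<exists>\<delta>>0. \<forall>n. \<forall>A\<in>sets circle_measure. A \<subseteq> I \<longrightarrow>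
      measure circle_measure A < \<delta> \<longrightarrow> (\<integral>\<^sup>+z\<in>A. log_plus (f n z) \<partial>circle_measure) < ennreal \<epsilon>"
    by blast
qed

end
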